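(* An $AB\bar B$-formula $\varphi$ is satisfied by some infinite interval structure if and only if it is featured by some periodic $\varphi$-compass structure with threshold $\tilde y_0<2^{2^{7|\varphi|}}$ and period $\tilde y<2|\varphi|\cdot 2^{2^{7|\varphi|}}\cdot 2^{2^{7|\varphi|}}$.
   Context: Syntax: $AB\bar B$-formulas are built from a set $\mathcal{P}$ of propositional variables using $\neg$, $\vee$ and unary modalities $\langle A\rangle,\langle B\rangle,\langle\bar B\rangle$ ($[R]\psi=\neg\langle R\rangle\neg\psi$); $|\varphi|$ is the size (number of subformulas) of $\varphi$. Semantics: an ordinal $N\le\omega$ is identified with $\{0,\dots,N-1\}$ ($\mathbb{N}$ if $N=\omega$); $\mathbb{I}_N$ is the set of intervals $[x,y]$ with $x,y\in N$, $x<y$. $[x,y]\,A\,[x',y']$ iff $y=x'$; $[x,y]\,B\,[x',y']$ iff $x=x'$ and $y'<y$; $[x,y]\,\bar B\,[x',y']$ iff $x=x'$ and $y<y'$. An interval structure $\mathcal{S}=(\mathbb{I}_N,A,B,\bar B,\sigma)$ has $\sigma:\mathbb{I}_N\to\mathcal{P}(\mathcal{P})$; it is infinite if $N=\omega$. $\mathcal{S},I\models p$ iff $p\in\sigma(I)$; booleans as usual; $\mathcal{S},I\models\langle R\rangle\psi$ iff some $J$ with $I\,R\,J$ has $\mathcal{S},J\models\psi$. $\mathcal{S}$ satisfies $\varphi$ if $\mathcal{S},I\models\varphi$ for some $I$. Atoms: $Cl(\varphi)$ is the set of subformulas of $\varphi$ and their negations (identifying $\neg\neg\alpha$ with $\alpha$,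 $\neg\langle R\rangle\alpha$ with $[R]\neg\alpha$); $Cl^+(\varphi)$ adds all $\langle R\rangle\alpha$, $\neg\langle R\rangle\alpha$ for $R\in\{A,B,\bar B\}$, $\alpha\in Cl(\varphi)$. A $\varphi$-atom is a nonempty $F\subseteq Cl^+(\varphi)$ with: $\alpha\in F$ iff $\neg\alpha\notin F$ for all $\alpha\in Cl^+(\varphi)$, and $\alpha\vee\beta\in F$ iff $\alpha\in F$ or $\beta\in F$. $obs(F)=\{\alpha\in Cl(\varphi):\alpha\in F\}$, $Req_R(F)=\{\alpha\in Cl(\varphi):\langle R\rangle\alpha\in F\}$. $F\leadsto_A G$ iff $Req_A(F)=obs(G)\cup Req_B(G)\cup Req_{\bar B}(G)$; $F\leadsto_B G$ iff $obs(F)\cup Req_{\bar B}(F)\subseteq Req_{\bar B}(G)\subseteq obs(F)\cup Req_{\bar B}(F)\cup Req_B(F)$ and $obs(G)\cup Req_B(G)\subseteq Req_B(F)\subseteq obs(G)\cup Req_B(G)\cup Req_{\bar B}(G)$. Compass structures: $\mathbb{P}_N=\{(x,y):0\le x<y<N\}$ with relations $A,B,\bar B$ as for the intervals $[x,y]$. A $\varphi$-compass structure of length $N$ is $(\mathbb{P}_N,\mathcal{L})$, $\mathcal{L}$ mapping points to $\varphi$-atoms, such that $p\,R\,q$ implies $\mathcal{L}(p)\leadsto_R\mathcal{L}(q)$ for $R\in\{A,B\}$ (consistency), and for every $p$, $R\in\{A,B,\bar B\}$, $\alpha\in Req_R(\mathcal{L}(p))$ there is $q$ with $p\,R\,q$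 and $\alpha\in obs(\mathcal{L}(q))$ (fulfillment). It features $\alpha$ if $\alpha\in\mathcal{L}(p)$ for some $p$. Periodicity: an infinite compass structure $(\mathbb{P}_\omega,\mathcal{L})$ is periodic with threshold $\tilde y_0$, period $\tilde y$ and binding $\tilde g:\{0,\dots,\tilde y_0+\tilde y-1\}\to\{0,\dots,\tilde y_0-1\}$ if (i) for all $\tilde y_0+\tilde y\le x<y$, $\mathcal{L}(x,y)=\mathcal{L}(x-\tilde y,y-\tilde y)$, and (ii) for all $0\le x<\tilde y_0+\tilde y\le y$, $\mathcal{L}(x,y)=\mathcal{L}(\tilde g(x),y-\tilde y)$. *)

theory Defs
  imports Main
begin

datatype rel = RA | RB | RBbar

datatype 'p fml = Var 'p | Neg "'p fml" | Or "'p fml" "'p fml" | Dia rel "'p fml"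

fun subfs :: "'p fml \<Rightarrow> 'p fml set" where
  "subfs (Var p) = {Var p}"
| "subfs (Neg a) = insert (Neg a) (subfs a)"
| "subfs (Or a b) = insert (Or a b) (subfs a \<union> subfs b)"
| "subfs (Dia r a) = insert (Dia r a) (subfs a)"

definition fsize :: "'p fml \<Rightarrow> nat" where
  "fsize \<phi> = card (subfs \<phi>)"

(* negation modulo the identification of \<not>\<not>\<alpha> with \<alpha> *)
fun neg :: "'p fml \<Rightarrow> 'p fml" where
  "neg (Neg a) = a"
| "neg a = Neg a"

(* interval relations on pairs (x,y), x<y *)
fun irel :: "rel \<Rightarrow> nat \<times> nat \<Rightarrow> nat \<times> nat \<Rightarrow> bool" where
  "irel RA (x, y) (x', y') \<longleftrightarrow> y = x'"
| "irel RB (x, y) (x', y') \<longleftrightarrow> x = x' \<and> y' < y"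
| "irel RBbar (x, y) (x', y') \<longleftrightarrow> x = x' \<and> y < y'"

definition is_point :: "nat \<times> nat \<Rightarrow> bool" where
  "is_point p \<longleftrightarrow> fst p < snd p"

(* semantics over the infinite interval structure on \<nat>, labelling \<sigma> *)
fun holds :: "(nat \<times> nat \<Rightarrow> 'p set) \<Rightarrow> nat \<times> nat \<Rightarrow> 'p fml \<Rightarrow> bool" where
  "holds \<sigma> I (Var p) \<longleftrightarrow> p \<in> \<sigma> I"
| "holds \<sigma> I (Neg a) \<longleftrightarrow> \<not> holds \<sigma> I a"
| "holds \<sigma> I (Or a b) \<longleftrightarrow> holds \<sigma> I a \<or> holds \<sigma> I b"
| "holds \<sigma> I (Dia r a) \<longleftrightarrow> (\<exists>J. is_point J \<and> irel r I J \<and> holds \<sigma> J a)"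

definition inf_satisfiable :: "'p fml \<Rightarrow> bool" where
  "inf_satisfiable \<phi> \<longleftrightarrow> (\<exists>\<sigma> I. is_point I \<and> holds \<sigma> I \<phi>)"

definition Cl :: "'p fml \<Rightarrow> 'p fml set" where
  "Cl \<phi> = subfs \<phi> \<union> neg ` subfs \<phi>"

definition ClPlus :: "'p fml \<Rightarrow> 'p fml set" where
  "ClPlus \<phi> = Cl \<phi> \<union> {Dia r a | r a. a \<in> Cl \<phi>} \<union> {neg (Dia r a) | r a. a \<in> Cl \<phi>}"

definition is_atom :: "'p fml \<Rightarrow> 'p fml set \<Rightarrow> bool" where
  "is_atom \<phi> F \<longleftrightarrow> F \<noteq> {} \<and> F \<subseteq> ClPlus \<phi>
     \<and> (\<forall>a \<in> ClPlus \<phi>. a \<in> F \<longleftrightarrow> neg a \<notin> F)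
     \<and> (\<forall>a b. Or a b \<in> ClPlus \<phi> \<longrightarrow> (Or a b \<in> F \<longleftrightarrow> a \<in> F \<or> b \<in> F))"

definition obs :: "'p fml \<Rightarrow> 'p fml set \<Rightarrow> 'p fml set" where
  "obs \<phi> F = {a \<in> Cl \<phi>. a \<in> F}"

definition Req :: "'p fml \<Rightarrow> rel \<Rightarrow> 'p fml set \<Rightarrow> 'p fml set" where
  "Req \<phi> r F = {a \<in> Cl \<phi>. Dia r a \<in> F}"

definition leadsA :: "'p fml \<Rightarrow> 'p fml set \<Rightarrow> 'p fml set \<Rightarrow> bool" where
  "leadsA \<phi> F G \<longleftrightarrow> Req \<phi> RA F = obs \<phi> G \<union> Req \<phi> RB G \<union> Req \<phi> RBbar G"

definition leadsB :: "'p fml \<Rightarrow> 'p fml set \<Rightarrow> 'p fml set \<Rightarrow> bool" where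
  "leadsB \<phi> F G \<longleftrightarrow>
     obs \<phi> F \<union> Req \<phi> RBbar F \<subseteq> Req \<phi> RBbar G
   \<and> Req \<phi> RBbar G \<subseteq> obs \<phi> F \<union> Req \<phi> RBbar F \<union> Req \<phi> RB F
   \<and> obs \<phi> G \<union> Req \<phi> RB G \<subseteq> Req \<phi> RB F
   \<and> Req \<phi> RB F \<subseteq> obs \<phi> G \<union> Req \<phi> RB G \<union> Req \<phi> RBbar G"

definition inf_compass :: "'p fml \<Rightarrow> (nat \<times> nat \<Rightarrow> 'p fml set) \<Rightarrow> bool" where
  "inf_compass \<phi> L \<longleftrightarrow>
     (\<forall>p. is_point p \<longrightarrow> is_atom \<phi> (L p))
   \<and> (\<forall>p q. is_point p \<and> is_point q \<and> irel RA p q \<longrightarrow> leadsA \<phi> (L p) (L q))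
   \<and> (\<forall>p q. is_point p \<and> is_point q \<and> irel RB p q \<longrightarrow> leadsB \<phi> (L p) (L q))
   \<and> (\<forall>p r a. is_point p \<and> a \<in> Req \<phi> r (L p) \<longrightarrow>
        (\<exists>q. is_point q \<and> irel r p q \<and> a \<in> obs \<phi> (L q)))"

definition features :: "(nat \<times> nat \<Rightarrow> 'p fml set) \<Rightarrow> 'p fml \<Rightarrow> bool" where
  "features L a \<longleftrightarrow> (\<exists>p. is_point p \<and> a \<in> L p)"

definition periodic :: "(nat \<times> nat \<Rightarrow> 'p fml set) \<Rightarrow> nat \<Rightarrow> nat \<Rightarrow> (nat \<Rightarrow> nat) \<Rightarrow> bool" where
  "periodic L y0 yp g \<longleftrightarrow>
     (\<forall>x < y0 + yp. g x < y0)
   \<and> (\<forall>x y. y0 + yp \<le> x \<and> x < y \<longrightarrow> L (x, y) = L (x - yp, y - yp))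
   \<and> (\<forall>x y. x < y0 + yp \<and> y0 + yp \<le> y \<longrightarrow> L (x, y) = L (g x, y - yp))"

end

(*
  "If" is the truth lemma: reading the letters off the labels of a compass structure makes
  each subformula hold exactly where its label contains it.  "Only if": the Hintikka labelling
  of a (shifted) model is a compass structure.  Each of its rows is summarised by a shadow,
  the labels generated from unit intervals by extending leftmost intervals; a schedule of rows
  respecting shadows rebuilds a structure meeting every compass condition except fulfilment
  of RBbar-requests, which is fairness of the schedule.  A fair, eventually periodic schedule
  is a lasso: a stem to a recurrent shadow, then a loop discharging each closure formula in
  turn.  Pigeonhole shortening of walks bounds the stem and each phase of the loop by the
  sizes of state spaces built from atoms, and at most 2^(7|phi|) atoms exist.
*)
theory Submission
  imports Defs "HOL-Library.Infinite_Set"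
begin

section \<open>Subformulas and closure\<close>

lemma finite_subfs [simp]: "finite (subfs a)"
  by (induction a) auto

lemma subfs_refl [simp]: "a \<in> subfs a"
  by (cases a) auto

lemma subfs_trans: "b \<in> subfs a \<Longrightarrow> subfs b \<subseteq> subfs a"
  by (induction a) auto

lemma subfs_NegD: "Neg c \<in> subfs a \<Longrightarrow> c \<in> subfs a"
  using subfs_trans[of "Neg c" a] by auto

lemma subfs_OrD: "Or b c \<in> subfs a \<Longrightarrow> b \<in> subfs a \<and> c \<in> subfs a"
  using subfs_trans[of "Or b c" a] by auto

lemma subfs_DiaD: "Dia r c \<in> subfs a \<Longrightarrow> c \<in> subfs a"
  using subfs_trans[of "Dia r c" a] by auto

lemma holds_neg [simp]: "holds \<sigma> I (neg a) \<longleftrightarrow> \<not> holds \<sigma> I a"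
  by (cases a) auto

lemma subfs_Cl: "subfs \<phi> \<subseteq> Cl \<phi>"
  unfolding Cl_def by auto

lemma Cl_ClPlus: "Cl \<phi> \<subseteq> ClPlus \<phi>"
  unfolding ClPlus_def by auto

lemma self_Cl: "\<phi> \<in> Cl \<phi>"
  using subfs_Cl subfs_refl by blast

lemma Dia_ClPlus: "a \<in> Cl \<phi> \<Longrightarrow> Dia r a \<in> ClPlus \<phi>"
  unfolding ClPlus_def by blast

lemma finite_Cl [simp]: "finite (Cl \<phi>)"
  unfolding Cl_def by simp

text \<open>Since \<open>neg\<close> strips a leading negation, every closure formula is a subformula
  or the negation of one.\<close>

lemma Cl_cases: "e \<in> Cl \<phi> \<Longrightarrow> e \<in> subfs \<phi> \<or> neg e \<in> subfs \<phi>"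
proof -
  assume "e \<in> Cl \<phi>"
  then consider "e \<in> subfs \<phi>" | s where "e = neg s" "s \<in> subfs \<phi>"
    unfolding Cl_def by blast
  then show ?thesis
  proof cases
    case 2
    then show ?thesis
      by (cases s) (auto dest: subfs_NegD)
  qed simp
qed

lemma neg_Cl: "e \<in> Cl \<phi> \<Longrightarrow> neg e \<in> Cl \<phi>"
  using Cl_cases[of e \<phi>] unfolding Cl_def by blast

lemma neg_ClPlus: "e \<in> ClPlus \<phi> \<Longrightarrow> neg e \<in> ClPlus \<phi>"
  unfolding ClPlus_def using neg_Cl[of e \<phi>] by auto

lemma Or_ClPlus: "Or a b \<in> ClPlus \<phi> \<Longrightarrow> Or a b \<in> subfs \<phi>"
  unfolding ClPlus_def Cl_def
proof (elim UnE imageE CollectE exE conjE)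
  fix s
  assume "Or a b = neg s" "s \<in> subfs \<phi>"
  then show ?thesis
    by (cases s) (auto dest: subfs_NegD)
qed auto

section \<open>Compass structures\<close>

lemma compass_atom: "inf_compass \<phi> L \<Longrightarrow> x < y \<Longrightarrow> is_atom \<phi> (L (x, y))"
  unfolding inf_compass_def is_point_def by auto

lemma compass_leadsA:
  "inf_compass \<phi> L \<Longrightarrow> x < y \<Longrightarrow> y < z \<Longrightarrow> leadsA \<phi> (L (x, y)) (L (y, z))"
  unfolding inf_compass_def is_point_def by auto

lemma compass_leadsB:
  "inf_compass \<phi> L \<Longrightarrow> x < y' \<Longrightarrow> y' < y \<Longrightarrow> leadsB \<phi> (L (x, y)) (L (x, y'))"
  unfolding inf_compass_def is_point_def by auto

lemma compass_fulfil:
  "inf_compass \<phi> L \<Longrightarrow> is_point p \<Longrightarrow> a \<in> Req \<phi> r (L p)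
    \<Longrightarrow> \<exists>q. is_point q \<and> irel r p q \<and> a \<in> obs \<phi> (L q)"
  unfolding inf_compass_def by blast

text \<open>Conversely to fulfilment, consistency makes every closure formula observed at an
  \<open>r\<close>-successor a requirement of the point: the \<open>RBbar\<close> case uses \<open>leadsB\<close> backwards.\<close>

lemma compass_request:
  assumes C: "inf_compass \<phi> L" and "is_point p" "is_point q" "irel r p q"
    and a: "a \<in> obs \<phi> (L q)"
  shows "a \<in> Req \<phi> r (L p)"
proof -
  obtain x y x' y' where pq: "p = (x, y)" "q = (x', y')" by fastforce
  show ?thesis
  proof (cases r)
    case RA
    then have "leadsA \<phi> (L p) (L q)" using C assms(2-4) unfolding inf_compass_def by blast
    then show ?thesis using a RA unfolding leadsA_def by blast
  next
    case RB
    then have "leadsB \<phi> (L p) (L q)" using C assms(2-4) unfolding inf_compass_def by blast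
    then show ?thesis using a RB unfolding leadsB_def by blast
  next
    case RBbar
    then have "irel RB q p" using assms(4) pq by simp
    then have "leadsB \<phi> (L q) (L p)" using C assms(2,3) unfolding inf_compass_def by blast
    then show ?thesis using a RBbar unfolding leadsB_def by blast
  qed
qed

definition valuation :: "(nat \<times> nat \<Rightarrow> 'p fml set) \<Rightarrow> nat \<times> nat \<Rightarrow> 'p set" where
  "valuation L p = {v. Var v \<in> L p}"

lemma truth_lemma:
  assumes C: "inf_compass \<phi> L"
  shows "a \<in> subfs \<phi> \<Longrightarrow> is_point I \<Longrightarrow> holds (valuation L) I a \<longleftrightarrow> a \<in> L I"
proof (induction a arbitrary: I)
  case (Var v)
  then show ?case by (simp add: valuation_def)
next
  case (Neg a)
  have "a \<in> subfs \<phi>" using Neg.prems subfs_NegD by blast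
  moreover have "Neg a \<in> ClPlus \<phi>" using Neg.prems subfs_Cl Cl_ClPlus by blast
  moreover have "is_atom \<phi> (L I)" using C Neg.prems unfolding inf_compass_def by blast
  ultimately have "Neg a \<in> L I \<longleftrightarrow> a \<notin> L I" unfolding is_atom_def by (metis neg.simps(1))
  then show ?case using Neg.IH Neg.prems \<open>a \<in> subfs \<phi>\<close> by simp
next
  case (Or a b)
  have "a \<in> subfs \<phi>" "b \<in> subfs \<phi>" using Or.prems subfs_OrD by blast+
  moreover have "Or a b \<in> ClPlus \<phi>" using Or.prems subfs_Cl Cl_ClPlus by blast
  moreover have "is_atom \<phi> (L I)" using C Or.prems unfolding inf_compass_def by blast
  ultimately have "Or a b \<in> L I \<longleftrightarrow> a \<in> L I \<or> b \<in> L I" unfolding is_atom_def by blast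
  then show ?case using Or.IH Or.prems \<open>a \<in> subfs \<phi>\<close> \<open>b \<in> subfs \<phi>\<close> by simp
next
  case (Dia r a)
  have sub: "a \<in> subfs \<phi>" using Dia.prems subfs_DiaD by blast
  then have aCl: "a \<in> Cl \<phi>" using subfs_Cl by blast
  have "(\<exists>J. is_point J \<and> irel r I J \<and> a \<in> L J) \<longleftrightarrow> a \<in> Req \<phi> r (L I)"
  proof
    assume "\<exists>J. is_point J \<and> irel r I J \<and> a \<in> L J"
    then show "a \<in> Req \<phi> r (L I)"
      using compass_request[OF C Dia.prems(2)] aCl unfolding obs_def by blast
  next
    assume "a \<in> Req \<phi> r (L I)"
    then show "\<exists>J. is_point J \<and> irel r I J \<and> a \<in> L J"
      using compass_fulfil[OF C Dia.prems(2)] unfolding obs_def by blast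
  qed
  then show ?case using Dia.IH[OF sub] aCl by (auto simp: Req_def)
qed

lemma compass_to_sat:
  assumes "inf_compass \<phi> L" "features L \<phi>"
  shows "inf_satisfiable \<phi>"
proof -
  obtain p where "is_point p" "\<phi> \<in> L p" using assms(2) unfolding features_def by blast
  then show ?thesis
    using truth_lemma[OF assms(1) subfs_refl] unfolding inf_satisfiable_def by blast
qed

section \<open>From models to compass structures\<close>

lemma holds_shift:
  "holds (\<lambda>p. \<sigma> (fst p + k, snd p + k)) (x, y) a \<longleftrightarrow> holds \<sigma> (x + k, y + k) a"
proof (induction a arbitrary: x y)
  case (Dia r a)
  let ?s = "\<lambda>p. \<sigma> (fst p + k, snd p + k)"
  show ?case
  proof
    assume "holds ?s (x, y) (Dia r a)"
    then obtain u v where "is_point (u, v)" "irel r (x, y) (u, v)" "holds ?s (u, v) a"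
      by auto
    then have "is_point (u + k, v + k)" "irel r (x + k, y + k) (u + k, v + k)"
      "holds \<sigma> (u + k, v + k) a"
      using Dia.IH by (cases r; auto simp: is_point_def)+
    then show "holds \<sigma> (x + k, y + k) (Dia r a)" by (simp only: holds.simps) blast
  next
    assume "holds \<sigma> (x + k, y + k) (Dia r a)"
    then obtain u v where J: "is_point (u, v)" "irel r (x + k, y + k) (u, v)" "holds \<sigma> (u, v) a"
      by auto
    then have "k \<le> u" "k \<le> v" by (cases r; auto simp: is_point_def)+
    then obtain u' v' where e: "u = u' + k" "v = v' + k" by (metis le_add_diff_inverse2)
    then have "is_point (u', v')" "irel r (x, y) (u', v')" "holds ?s (u', v') a"
      using J Dia.IH by (cases r; auto simp: is_point_def)+
    then show "holds ?s (x, y) (Dia r a)" by (simp only: holds.simps) blast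
  qed
qed auto

definition hintikka :: "(nat \<times> nat \<Rightarrow> 'p set) \<Rightarrow> 'p fml \<Rightarrow> nat \<times> nat \<Rightarrow> 'p fml set" where
  "hintikka \<sigma> \<phi> p = {a \<in> ClPlus \<phi>. holds \<sigma> p a}"

lemma hintikka_atom: "is_atom \<phi> (hintikka \<sigma> \<phi> p)"
proof -
  have phi: "\<phi> \<in> ClPlus \<phi>" using self_Cl Cl_ClPlus by blast
  have "\<phi> \<in> hintikka \<sigma> \<phi> p \<or> neg \<phi> \<in> hintikka \<sigma> \<phi> p"
    using phi neg_ClPlus[OF phi] unfolding hintikka_def by auto
  moreover have "Or a b \<in> hintikka \<sigma> \<phi> p \<longleftrightarrow> a \<in> hintikka \<sigma> \<phi> p \<or> b \<in> hintikka \<sigma> \<phi> p"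
    if "Or a b \<in> ClPlus \<phi>" for a b
  proof -
    have "a \<in> ClPlus \<phi>" "b \<in> ClPlus \<phi>"
      using Or_ClPlus[OF that] subfs_OrD subfs_Cl Cl_ClPlus by blast+
    then show ?thesis using that unfolding hintikka_def by auto
  qed
  ultimately show ?thesis
    using neg_ClPlus unfolding is_atom_def hintikka_def by auto
qed

lemma hintikka_Req:
  "a \<in> Req \<phi> r (hintikka \<sigma> \<phi> p) \<longleftrightarrow> a \<in> Cl \<phi> \<and> (\<exists>J. is_point J \<and> irel r p J \<and> holds \<sigma> J a)"
  unfolding Req_def hintikka_def using Dia_ClPlus by auto

lemma hintikka_obs: "a \<in> obs \<phi> (hintikka \<sigma> \<phi> p) \<longleftrightarrow> a \<in> Cl \<phi> \<and> holds \<sigma> p a"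
  unfolding obs_def hintikka_def using Cl_ClPlus by auto

text \<open>In the Hintikka labelling, both the \<open>A\<close>-requests of \<open>[x,y]\<close> and the formulas in
  \<open>obs \<union> Req RB \<union> Req RBbar\<close> of \<open>[y,z]\<close> describe what holds on intervals starting at \<open>y\<close>.\<close>

lemma hintikka_leadsA:
  assumes "x < y" "y < z"
  shows "leadsA \<phi> (hintikka \<sigma> \<phi> (x, y)) (hintikka \<sigma> \<phi> (y, z))"
proof -
  have "a \<in> obs \<phi> (hintikka \<sigma> \<phi> (y, z)) \<union> Req \<phi> RB (hintikka \<sigma> \<phi> (y, z))
            \<union> Req \<phi> RBbar (hintikka \<sigma> \<phi> (y, z))
        \<longleftrightarrow> a \<in> Cl \<phi> \<and> (\<exists>w. y < w \<and> holds \<sigma> (y, w) a)" for a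
  proof -
    have "(\<exists>w. y < w \<and> holds \<sigma> (y, w) a) \<longleftrightarrow>
        holds \<sigma> (y, z) a \<or> (\<exists>w. y < w \<and> w < z \<and> holds \<sigma> (y, w) a)
          \<or> (\<exists>w. z < w \<and> holds \<sigma> (y, w) a)"
      using assms(2) by (metis less_trans linorder_neqE_nat)
    then show ?thesis
      unfolding Un_iff hintikka_obs hintikka_Req using assms(2) by (auto simp: is_point_def)
  qed
  moreover have "a \<in> Req \<phi> RA (hintikka \<sigma> \<phi> (x, y))
        \<longleftrightarrow> a \<in> Cl \<phi> \<and> (\<exists>w. y < w \<and> holds \<sigma> (y, w) a)" for a
    unfolding hintikka_Req by (auto simp: is_point_def)
  ultimately show ?thesis unfolding leadsA_def by blast
qed

lemma hintikka_leadsB: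
  assumes "x < y'" "y' < y"
  shows "leadsB \<phi> (hintikka \<sigma> \<phi> (x, y)) (hintikka \<sigma> \<phi> (x, y'))"
proof -
  have B: "a \<in> Req \<phi> RB (hintikka \<sigma> \<phi> (x, z))
      \<longleftrightarrow> a \<in> Cl \<phi> \<and> (\<exists>w. x < w \<and> w < z \<and> holds \<sigma> (x, w) a)" for a z
    unfolding hintikka_Req by (auto simp: is_point_def)
  have Bbar: "a \<in> Req \<phi> RBbar (hintikka \<sigma> \<phi> (x, z))
      \<longleftrightarrow> a \<in> Cl \<phi> \<and> (\<exists>w. x < w \<and> z < w \<and> holds \<sigma> (x, w) a)" for a z
    unfolding hintikka_Req by (auto simp: is_point_def)
  have tri: "w = y' \<or> w < y' \<or> y' < w" "w = y \<or> w < y \<or> y < w" for w :: nat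
    by linarith+
  show ?thesis unfolding leadsB_def
  proof (intro conjI subsetI)
    fix a assume "a \<in> obs \<phi> (hintikka \<sigma> \<phi> (x, y)) \<union> Req \<phi> RBbar (hintikka \<sigma> \<phi> (x, y))"
    then show "a \<in> Req \<phi> RBbar (hintikka \<sigma> \<phi> (x, y'))"
      unfolding Un_iff hintikka_obs Bbar using assms by (meson less_trans)
  next
    fix a assume "a \<in> Req \<phi> RBbar (hintikka \<sigma> \<phi> (x, y'))"
    then show "a \<in> obs \<phi> (hintikka \<sigma> \<phi> (x, y)) \<union> Req \<phi> RBbar (hintikka \<sigma> \<phi> (x, y))
        \<union> Req \<phi> RB (hintikka \<sigma> \<phi> (x, y))"
      unfolding Un_iff hintikka_obs B Bbar using assms tri(2) by metis
  next
    fix a assume "a \<in> obs \<phi> (hintikka \<sigma> \<phi> (x, y')) \<union> Req \<phi> RB (hintikka \<sigma> \<phi> (x, y'))"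
    then show "a \<in> Req \<phi> RB (hintikka \<sigma> \<phi> (x, y))"
      unfolding Un_iff hintikka_obs B using assms by (meson less_trans)
  next
    fix a assume "a \<in> Req \<phi> RB (hintikka \<sigma> \<phi> (x, y))"
    then show "a \<in> obs \<phi> (hintikka \<sigma> \<phi> (x, y')) \<union> Req \<phi> RB (hintikka \<sigma> \<phi> (x, y'))
        \<union> Req \<phi> RBbar (hintikka \<sigma> \<phi> (x, y'))"
      unfolding Un_iff hintikka_obs B Bbar using assms tri(1) by metis
  qed
qed

lemma hintikka_compass: "inf_compass \<phi> (hintikka \<sigma> \<phi>)"
  unfolding inf_compass_def
proof (intro conjI allI impI)
  fix p q assume "is_point p \<and> is_point q \<and> irel RA p q"
  then show "leadsA \<phi> (hintikka \<sigma> \<phi> p) (hintikka \<sigma> \<phi> q)"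
    using hintikka_leadsA by (cases p; cases q) (auto simp: is_point_def)
next
  fix p q assume "is_point p \<and> is_point q \<and> irel RB p q"
  then show "leadsB \<phi> (hintikka \<sigma> \<phi> p) (hintikka \<sigma> \<phi> q)"
    using hintikka_leadsB by (cases p; cases q) (auto simp: is_point_def)
qed (auto simp: hintikka_atom hintikka_Req hintikka_obs)

text \<open>A model of \<open>\<phi>\<close> yields a compass structure containing \<open>\<phi>\<close> at a point \<open>(0,y)\<close>:
  shift the satisfying interval to start at \<open>0\<close> and take the Hintikka labelling.\<close>

lemma sat_to_compass:
  assumes "inf_satisfiable \<phi>"
  shows "\<exists>L y. inf_compass \<phi> L \<and> 0 < y \<and> \<phi> \<in> L (0, y)"
proof -
  obtain \<sigma> x y where I: "x < y" "holds \<sigma> (x, y) \<phi>"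
    using assms unfolding inf_satisfiable_def is_point_def by auto
  define \<sigma>' where "\<sigma>' = (\<lambda>p. \<sigma> (fst p + x, snd p + x))"
  have "holds \<sigma>' (0, y - x) \<phi>" unfolding \<sigma>'_def holds_shift using I by simp
  then have "\<phi> \<in> hintikka \<sigma>' \<phi> (0, y - x)"
    unfolding hintikka_def using self_Cl Cl_ClPlus by blast
  then show ?thesis using hintikka_compass I(1) by (metis zero_less_diff)
qed

section \<open>Counting atoms\<close>

lemma UNIV_rel: "(UNIV :: rel set) = {RA, RB, RBbar}"
  using rel.exhaust by auto

lemma card_Cl: "card (Cl \<phi>) \<le> 2 * fsize \<phi>"
proof -
  have "card (Cl \<phi>) \<le> card (subfs \<phi>) + card (neg ` subfs \<phi>)"
    unfolding Cl_def by (rule card_Un_le)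
  also have "\<dots> \<le> card (subfs \<phi>) + card (subfs \<phi>)"
    using card_image_le[OF finite_subfs, of neg \<phi>] by simp
  finally show ?thesis unfolding fsize_def by simp
qed

lemma fsize_pos: "0 < fsize \<phi>"
  unfolding fsize_def using subfs_refl[of \<phi>] finite_subfs[of \<phi>] card_gt_0_iff by blast

lemma finite_ClPlus [simp]: "finite (ClPlus \<phi>)"
proof -
  have "{Dia r a |r a. a \<in> Cl \<phi>} = (\<lambda>(r, a). Dia r a) ` (UNIV \<times> Cl \<phi>)"
    "{neg (Dia r a) |r a. a \<in> Cl \<phi>} = (\<lambda>(r, a). neg (Dia r a)) ` (UNIV \<times> Cl \<phi>)"
    by auto
  then show ?thesis unfolding ClPlus_def by (simp add: UNIV_rel)
qed

text \<open>An atom is determined by its intersection with the \<open>atom_basis\<close>: every other formula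
  of \<open>ClPlus \<phi>\<close> is the negation of a basis formula. The basis has at most \<open>7 * fsize \<phi>\<close>
  elements, which yields the bound \<open>2 ^ (7 * fsize \<phi>)\<close> on the number of atoms.\<close>

definition atom_basis :: "'p fml \<Rightarrow> 'p fml set" where
  "atom_basis \<phi> = subfs \<phi> \<union> (\<lambda>(r, a). Dia r a) ` (UNIV \<times> Cl \<phi>)"

lemma finite_atom_basis: "finite (atom_basis \<phi>)"
  unfolding atom_basis_def by (simp add: UNIV_rel)

lemma card_atom_basis: "card (atom_basis \<phi>) \<le> 7 * fsize \<phi>"
proof -
  have "card ((\<lambda>(r, a). Dia r a) ` ((UNIV :: rel set) \<times> Cl \<phi>)) \<le> card ((UNIV :: rel set) \<times> Cl \<phi>)"
    by (rule card_image_le) (simp add: UNIV_rel)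
  also have "\<dots> = 3 * card (Cl \<phi>)"
    by (simp add: card_cartesian_product UNIV_rel)
  finally have "card ((\<lambda>(r, a). Dia r a) ` ((UNIV :: rel set) \<times> Cl \<phi>)) \<le> 6 * fsize \<phi>"
    using card_Cl[of \<phi>] by linarith
  moreover have "card (atom_basis \<phi>)
      \<le> card (subfs \<phi>) + card ((\<lambda>(r, a). Dia r a) ` ((UNIV :: rel set) \<times> Cl \<phi>))"
    unfolding atom_basis_def by (rule card_Un_le)
  ultimately show ?thesis unfolding fsize_def by linarith
qed

lemma ClPlus_atom_basis: "e \<in> ClPlus \<phi> \<Longrightarrow> e \<in> atom_basis \<phi> \<or> neg e \<in> atom_basis \<phi>"
proof -
  assume "e \<in> ClPlus \<phi>"
  then consider "e \<in> Cl \<phi>" | r a where "e = Dia r a" "a \<in> Cl \<phi>"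
    | r a where "e = neg (Dia r a)" "a \<in> Cl \<phi>"
    unfolding ClPlus_def by blast
  then show ?thesis
  proof cases
    case 1
    then show ?thesis using Cl_cases[of e \<phi>] unfolding atom_basis_def by blast
  next
    case (2 r a)
    then have "e \<in> (\<lambda>(r, a). Dia r a) ` (UNIV \<times> Cl \<phi>)" by (auto intro: image_eqI[of _ _ "(r, a)"])
    then show ?thesis unfolding atom_basis_def by blast
  next
    case (3 r a)
    then have "neg e \<in> (\<lambda>(r, a). Dia r a) ` (UNIV \<times> Cl \<phi>)" by (auto intro: image_eqI[of _ _ "(r, a)"])
    then show ?thesis unfolding atom_basis_def by blast
  qed
qed

definition atoms :: "'p fml \<Rightarrow> 'p fml set set" where
  "atoms \<phi> = {F. is_atom \<phi> F}"

lemma atoms_inj_on_basis: "inj_on (\<lambda>F. F \<inter> atom_basis \<phi>) (atoms \<phi>)"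
proof (rule inj_onI)
  fix F G assume F: "F \<in> atoms \<phi>" and G: "G \<in> atoms \<phi>"
    and eq: "F \<inter> atom_basis \<phi> = G \<inter> atom_basis \<phi>"
  have "e \<in> F \<longleftrightarrow> e \<in> G" if e: "e \<in> ClPlus \<phi>" for e
  proof (cases "e \<in> atom_basis \<phi>")
    case False
    then have "neg e \<in> atom_basis \<phi>" using ClPlus_atom_basis[OF e] by blast
    moreover have "e \<in> F \<longleftrightarrow> neg e \<notin> F" "e \<in> G \<longleftrightarrow> neg e \<notin> G"
      using F G e unfolding atoms_def is_atom_def by simp_all
    ultimately show ?thesis using eq by blast
  next
    case True
    then show ?thesis using eq by blast
  qed
  moreover have "F \<subseteq> ClPlus \<phi>" "G \<subseteq> ClPlus \<phi>"
    using F G unfolding atoms_def is_atom_def by auto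
  ultimately show "F = G" by blast
qed

lemma finite_atoms [simp]: "finite (atoms \<phi>)"
proof -
  have "atoms \<phi> \<subseteq> Pow (ClPlus \<phi>)" unfolding atoms_def is_atom_def by auto
  then show ?thesis by (rule finite_subset) simp
qed

lemma card_atoms: "card (atoms \<phi>) \<le> 2 ^ (7 * fsize \<phi>)"
proof -
  have "card (atoms \<phi>) = card ((\<lambda>F. F \<inter> atom_basis \<phi>) ` atoms \<phi>)"
    using atoms_inj_on_basis card_image by metis
  also have "\<dots> \<le> card (Pow (atom_basis \<phi>))"
    by (rule card_mono) (auto simp: finite_atom_basis)
  also have "\<dots> = 2 ^ card (atom_basis \<phi>)"
    using finite_atom_basis card_Pow by blast
  also have "\<dots> \<le> 2 ^ (7 * fsize \<phi>)"
    using card_atom_basis by (intro power_increasing) auto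
  finally show ?thesis .
qed

section \<open>Walks and the pigeonhole shortening argument\<close>

text \<open>A walk of length \<open>n\<close> through a family \<open>Sh\<close> of row summaries is a sequence of row
  indices \<open>w 0, \<dots>, w n\<close> in which every row is interchangeable with the successor of its
  predecessor: \<open>Sh (w j + 1) = Sh (w (j + 1))\<close>.\<close>

definition walk :: "(nat \<Rightarrow> 'x) \<Rightarrow> (nat \<Rightarrow> nat) \<Rightarrow> nat \<Rightarrow> bool" where
  "walk Sh w n \<longleftrightarrow> (\<forall>j<n. Sh (Suc (w j)) = Sh (w (Suc j)))"

fun track :: "(nat \<Rightarrow> 'b \<Rightarrow> 'b) \<Rightarrow> (nat \<Rightarrow> nat) \<Rightarrow> 'b \<Rightarrow> nat \<Rightarrow> 'b" where
  "track \<delta> w U 0 = U"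
| "track \<delta> w U (Suc k) = \<delta> (w k) (track \<delta> w U k)"

lemma track_cong: "(\<And>k. k < n \<Longrightarrow> w k = w' k) \<Longrightarrow> track \<delta> w U n = track \<delta> w' U n"
  by (induction n) auto

lemma walk_cut:
  fixes w :: "nat \<Rightarrow> nat"
  assumes w: "walk Sh w n" and ij: "0 < i" "i < j" "j \<le> n"
    and same: "Sh (w i) = Sh (w j)" "track \<delta> w U i = track \<delta> w U j"
  defines "d \<equiv> j - i"
  defines "w' \<equiv> \<lambda>k. if k < i then w k else w (k + d)"
  shows "walk Sh w' (n - d)"
    and "(Sh (w' k), track \<delta> w' U k)
        = (Sh (w (if k < i then k else k + d)), track \<delta> w U (if k < i then k else k + d))"
proof -
  have j: "j = i + d" using ij unfolding d_def by simp
  show "walk Sh w' (n - d)"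
    unfolding walk_def
  proof (intro allI impI)
    fix k assume k: "k < n - d"
    consider "Suc k < i" | "Suc k = i" | "i \<le> k" by linarith
    then show "Sh (Suc (w' k)) = Sh (w' (Suc k))"
    proof cases
      case 2
      then have "Sh (Suc (w k)) = Sh (w i)" using w ij unfolding walk_def by auto
      then show ?thesis using 2 same(1) j unfolding w'_def by auto
    qed (use w k j in \<open>auto simp: walk_def w'_def\<close>)
  qed
  have "track \<delta> w' U k = track \<delta> w U (k + d)" if "i \<le> k" for k
    using that
  proof (induction k rule: dec_induct)
    case base
    have "track \<delta> w' U i = track \<delta> w U i" by (rule track_cong) (simp add: w'_def)
    then show ?case using same(2) j by simp
  qed (simp add: w'_def)
  moreover have "track \<delta> w' U k = track \<delta> w U k" if "k < i" for k
    using that by (intro track_cong) (simp add: w'_def)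
  ultimately show "(Sh (w' k), track \<delta> w' U k)
      = (Sh (w (if k < i then k else k + d)), track \<delta> w U (if k < i then k else k + d))"
    unfolding w'_def by simp
qed

text \<open>If all states at positions \<open>1..n\<close> lie in a finite set \<open>N\<close> and \<open>n > |N|\<close>, two of
  them coincide, and cutting yields a strictly shorter walk with the same start and final
  state.\<close>

lemma walk_shorten_step:
  fixes w :: "nat \<Rightarrow> nat"
  assumes N: "finite N" and w: "walk Sh w n" and long: "card N < n"
    and in_N: "\<forall>j\<in>{1..n}. (Sh (w j), track \<delta> w U j) \<in> N"
  shows "\<exists>w' n'. w' 0 = w 0 \<and> walk Sh w' n' \<and> 1 \<le> n' \<and> n' < n
    \<and> (Sh (w' n'), track \<delta> w' U n') = (Sh (w n), track \<delta> w U n)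
    \<and> (\<forall>j\<in>{1..n'}. (Sh (w' j), track \<delta> w' U j) \<in> N)"
proof -
  define st where "st j = (Sh (w j), track \<delta> w U j)" for j
  have "\<not> inj_on st {1..n}"
  proof
    assume "inj_on st {1..n}"
    then have "card (st ` {1..n}) = n" by (simp add: card_image)
    moreover have "card (st ` {1..n}) \<le> card N"
      using in_N N unfolding st_def by (intro card_mono) auto
    ultimately show False using long by simp
  qed
  then obtain i j where ij: "1 \<le> i" "i < j" "j \<le> n" "st i = st j"
    unfolding inj_on_def by (metis atLeastAtMost_iff linorder_neqE_nat)
  define d where "d = j - i"
  define w' where "w' = (\<lambda>k. if k < i then w k else w (k + d))"
  note cut = walk_cut[OF w _ ij(2,3), of \<delta> U, folded d_def, folded w'_def]
  have same: "Sh (w i) = Sh (w j)" "track \<delta> w U i = track \<delta> w U j"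
    using ij(4) unfolding st_def by auto
  have st': "(Sh (w' k), track \<delta> w' U k) = st (if k < i then k else k + d)" for k
    using cut(2)[OF _ same] ij unfolding st_def by (simp add: w'_def)
  have "i \<le> n - d" "n - d < n" using ij unfolding d_def by auto
  moreover have "w' 0 = w 0" using ij unfolding w'_def by simp
  moreover have "(Sh (w' (n - d)), track \<delta> w' U (n - d)) = st n"
    using st'[of "n - d"] \<open>i \<le> n - d\<close> ij unfolding d_def by simp
  moreover have "(Sh (w' k), track \<delta> w' U k) \<in> N" if "k \<in> {1..n - d}" for k
  proof -
    have "(if k < i then k else k + d) \<in> {1..n}" using that ij unfolding d_def by auto
    then show ?thesis using st'[of k] in_N unfolding st_def by metis
  qed
  ultimately show ?thesis
    using cut(1)[OF _ same] ij unfolding st_def by (intro exI[of _ w'] exI[of _ "n - d"]) auto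
qed

lemma walk_shorten:
  fixes w :: "nat \<Rightarrow> nat"
  assumes N: "finite N"
  shows "walk Sh w n \<Longrightarrow> 1 \<le> n \<Longrightarrow> P (Sh (w n)) (track \<delta> w U n) \<Longrightarrow>
    \<forall>j\<in>{1..n}. (Sh (w j), track \<delta> w U j) \<in> N \<Longrightarrow>
    \<exists>w' n'. w' 0 = w 0 \<and> walk Sh w' n' \<and> 1 \<le> n' \<and> n' \<le> card N \<and> P (Sh (w' n')) (track \<delta> w' U n')"
proof (induction n arbitrary: w rule: less_induct)
  case (less n)
  show ?case
  proof (cases "n \<le> card N")
    case False
    then obtain w' n' where w': "w' 0 = w 0" "walk Sh w' n'" "1 \<le> n'" "n' < n"
      "(Sh (w' n'), track \<delta> w' U n') = (Sh (w n), track \<delta> w U n)"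
      "\<forall>j\<in>{1..n'}. (Sh (w' j), track \<delta> w' U j) \<in> N"
      using walk_shorten_step[OF N less.prems(1) _ less.prems(4)] by auto
    then show ?thesis using less.IH[of n' w'] less.prems(3) by auto
  qed (use less.prems in blast)
qed

definition walk_append :: "(nat \<Rightarrow> nat) \<Rightarrow> nat \<Rightarrow> (nat \<Rightarrow> nat) \<Rightarrow> nat \<Rightarrow> nat" where
  "walk_append w1 n1 w2 k = (if k \<le> n1 then w1 k else w2 (k - n1))"

lemma walk_append_left: "k \<le> n1 \<Longrightarrow> walk_append w1 n1 w2 k = w1 k"
  unfolding walk_append_def by simp

lemma walk_append_right: "w2 0 = w1 n1 \<Longrightarrow> walk_append w1 n1 w2 (n1 + k) = w2 k"
  unfolding walk_append_def by (cases k) auto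

lemma walk_append:
  assumes w1: "walk Sh w1 n1" and w2: "walk Sh w2 n2" and glue: "w2 0 = w1 n1"
  shows "walk Sh (walk_append w1 n1 w2) (n1 + n2)"
  unfolding walk_def
proof (intro allI impI)
  fix k assume k: "k < n1 + n2"
  show "Sh (Suc (walk_append w1 n1 w2 k)) = Sh (walk_append w1 n1 w2 (Suc k))"
  proof (cases "k < n1")
    case True
    then show ?thesis using w1 walk_append_left[of k] walk_append_left[of "Suc k"]
      unfolding walk_def by simp
  next
    case False
    define i where "i = k - n1"
    have i: "k = n1 + i" "i < n2" using k False unfolding i_def by auto
    then show ?thesis using w2 walk_append_right[of w2 w1 n1, OF glue]
      unfolding walk_def by (metis add_Suc_right)
  qed
qed

definition lasso :: "(nat \<Rightarrow> nat) \<Rightarrow> nat \<Rightarrow> (nat \<Rightarrow> nat) \<Rightarrow> nat \<Rightarrow> nat \<Rightarrow> nat" where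
  "lasso ws y0 lp p r = (if r < y0 then ws r else lp ((r - y0) mod p))"

lemma lasso_periodic:
  assumes "y0 \<le> r"
  shows "lasso ws y0 lp p (r + p) = lasso ws y0 lp p r"
proof -
  have "(r + p - y0) mod p = (r - y0) mod p"
    using assms by (metis Nat.add_diff_assoc2 mod_add_self2)
  then show ?thesis using assms unfolding lasso_def by simp
qed

lemma lasso_loop:
  assumes "i < p"
  shows "lasso ws y0 lp p (y0 + m * p + i) = lp i"
proof -
  have "y0 + m * p + i - y0 = i + m * p" by simp
  moreover have "(i + m * p) mod p = i" using assms by simp
  ultimately show ?thesis unfolding lasso_def by simp
qed

lemma lasso_walk:
  assumes ws: "walk Sh ws y0" and lp: "walk Sh lp p" and glue: "lp 0 = ws y0"
    and closed: "Sh (lp p) = Sh (lp 0)" and p: "0 < p"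
  shows "Sh (Suc (lasso ws y0 lp p r)) = Sh (lasso ws y0 lp p (Suc r))"
proof -
  consider "Suc r < y0" | "Suc r = y0" | "y0 \<le> r" by linarith
  then show ?thesis
  proof cases
    case 1
    then show ?thesis using ws unfolding walk_def lasso_def by auto
  next
    case 2
    then show ?thesis using ws glue unfolding walk_def lasso_def by auto
  next
    case 3
    define j where "j = (r - y0) mod p"
    have j: "j < p" "lasso ws y0 lp p r = lp j" using 3 p unfolding j_def lasso_def by auto
    have next_j: "lasso ws y0 lp p (Suc r) = (if Suc j = p then lp 0 else lp (Suc j))"
      using 3 mod_Suc[of "r - y0" p] unfolding j_def lasso_def by (simp add: Suc_diff_le)
    show ?thesis
      using lp j closed unfolding walk_def next_j by (cases "Suc j = p") auto
  qed
qed

text \<open>A walk state is a nonempty set of atoms (a shadow) paired with a set of atoms (the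
  pending labels); along the stem nothing is pending.\<close>

definition loop_states :: "'p fml \<Rightarrow> ('p fml set set \<times> 'p fml set set) set" where
  "loop_states \<phi> = (Pow (atoms \<phi>) - {{}}) \<times> Pow (atoms \<phi>)"

definition stem_states :: "'p fml \<Rightarrow> ('p fml set set \<times> 'p fml set set) set" where
  "stem_states \<phi> = (Pow (atoms \<phi>) - {{}}) \<times> {{}}"

lemma finite_stem_states: "finite (stem_states \<phi>)"
  unfolding stem_states_def by simp

lemma finite_loop_states: "finite (loop_states \<phi>)"
  unfolding loop_states_def by simp

lemma card_stem_states: "card (stem_states \<phi>) = 2 ^ card (atoms \<phi>) - 1"
  unfolding stem_states_def by (simp add: card_cartesian_product card_Diff_singleton card_Pow)

lemma card_loop_states: "card (loop_states \<phi>) = (2 ^ card (atoms \<phi>) - 1) * 2 ^ card (atoms \<phi>)"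
  unfolding loop_states_def by (simp add: card_cartesian_product card_Diff_singleton card_Pow)

section \<open>Row summaries of a compass structure\<close>

lemma leadsB_trans: "leadsB \<phi> G F \<Longrightarrow> leadsB \<phi> F E \<Longrightarrow> leadsB \<phi> G E"
  unfolding leadsB_def by blast

text \<open>The formulas an atom says hold on some interval with its own start point:
  \<open>leadsB\<close> preserves this set, and \<open>leadsA\<close> says it equals the \<open>A\<close>-requests of the left neighbour.\<close>

definition onward :: "'p fml \<Rightarrow> 'p fml set \<Rightarrow> 'p fml set" where
  "onward \<phi> F = obs \<phi> F \<union> Req \<phi> RB F \<union> Req \<phi> RBbar F"

lemma leadsB_onward: "leadsB \<phi> G F \<Longrightarrow> onward \<phi> G = onward \<phi> F"
  unfolding leadsB_def onward_def by blast

lemma Req_Cl: "a \<in> Req \<phi> r F \<Longrightarrow> a \<in> Cl \<phi>"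
  unfolding Req_def by blast

lemma nat_antimono_stabilizes:
  fixes f :: "nat \<Rightarrow> nat"
  assumes "\<And>j. f (Suc j) \<le> f j"
  shows "\<exists>J. \<forall>j\<ge>J. f j = f J"
proof -
  obtain J where J: "f J = (LEAST v. v \<in> range f)"
    by (metis (mono_tags) LeastI rangeE rangeI)
  have "f j = f J" if "j \<ge> J" for j
  proof -
    have "f j \<le> f J" using that assms by (induction j rule: dec_induct) (auto intro: order_trans)
    moreover have "f J \<le> f j" unfolding J by (rule Least_le) simp
    ultimately show ?thesis by simp
  qed
  then show ?thesis by blast
qed

text \<open>The \<open>shadow\<close> of row \<open>y\<close> is the set of labels generated from births by extensions; it
  is a subset of the labels of row \<open>y\<close> which is closed under these operations, and rows
  with equal shadow are interchangeable when a structure is rebuilt row by row.\<close>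

locale compass =
  fixes \<phi> :: "'p fml" and L :: "nat \<times> nat \<Rightarrow> 'p fml set"
  assumes compass: "inf_compass \<phi> L"
begin

definition row :: "nat \<Rightarrow> 'p fml set set" where
  "row y = {L (c, y) | c. c < y}"

definition leftmost :: "nat \<Rightarrow> 'p fml set \<Rightarrow> nat" where
  "leftmost y F = (if \<exists>c<y. L (c, y) = F then LEAST c. c < y \<and> L (c, y) = F else 0)"

definition extend :: "nat \<Rightarrow> 'p fml set \<Rightarrow> 'p fml set" where
  "extend y F = L (leftmost y F, Suc y)"

definition birth :: "nat \<Rightarrow> 'p fml set" where
  "birth y = L (y, Suc y)"

fun shadow :: "nat \<Rightarrow> 'p fml set set" where
  "shadow 0 = {}"
| "shadow (Suc y) = extend y ` shadow y \<union> {birth y}"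

lemma leftmost_row: "F \<in> row y \<Longrightarrow> leftmost y F < y \<and> L (leftmost y F, y) = F"
proof -
  assume "F \<in> row y"
  then have ex: "\<exists>c<y. L (c, y) = F" unfolding row_def by blast
  then show ?thesis
    unfolding leftmost_def using LeastI_ex[of "\<lambda>c. c < y \<and> L (c, y) = F"] by simp
qed

lemma leftmost_le: "c < y \<Longrightarrow> leftmost y (L (c, y)) \<le> c"
  unfolding leftmost_def by (auto intro: Least_le)

lemma row_atom: "F \<in> row y \<Longrightarrow> F \<in> atoms \<phi>"
  unfolding row_def atoms_def using compass_atom[OF compass] by blast

lemma extend_row: "F \<in> row y \<Longrightarrow> extend y F \<in> row (Suc y)"
  unfolding extend_def using leftmost_row[of F y] unfolding row_def by auto

lemma birth_row: "birth y \<in> row (Suc y)"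
  unfolding birth_def row_def by auto

lemma shadow_row: "shadow y \<subseteq> row y"
  by (induction y) (auto simp: extend_row birth_row)

lemma shadow_atoms: "shadow y \<subseteq> atoms \<phi>"
  using shadow_row row_atom by blast

lemma finite_shadow: "finite (shadow y)"
  by (induction y) auto

lemma extend_leadsB: "F \<in> row y \<Longrightarrow> leadsB \<phi> (extend y F) F"
  using leftmost_row[of F y] compass_leadsB[OF compass, of "leftmost y F" y "Suc y"]
  unfolding extend_def by auto

lemma extend_Req_B: "F \<in> row y \<Longrightarrow> Req \<phi> RB (extend y F) \<subseteq> obs \<phi> F \<union> Req \<phi> RB F"
proof
  fix a assume F: "F \<in> row y" and a: "a \<in> Req \<phi> RB (extend y F)"
  define c where "c = leftmost y F"
  have c: "c < y" "L (c, y) = F" using leftmost_row[OF F] c_def by auto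
  obtain z where z: "c < z" "z < Suc y" "a \<in> obs \<phi> (L (c, z))"
    using compass_fulfil[OF compass, of "(c, Suc y)"] a c
    unfolding extend_def c_def[symmetric] by (force simp: is_point_def)
  show "a \<in> obs \<phi> F \<union> Req \<phi> RB F"
  proof (cases "z = y")
    case False
    then have "leadsB \<phi> F (L (c, z))" using compass_leadsB[OF compass] z c by auto
    then show ?thesis using z unfolding leadsB_def by auto
  qed (use z c in auto)
qed

lemma birth_Req_B: "Req \<phi> RB (birth y) = {}"
proof -
  have "a \<notin> Req \<phi> RB (L (y, Suc y))" for a
    using compass_fulfil[OF compass, of "(y, Suc y)" a RB] by (auto simp: is_point_def)
  then show ?thesis unfolding birth_def by blast
qed

lemma extend_Req_Bbar:
  "F \<in> row y \<Longrightarrow> Req \<phi> RBbar F \<subseteq> obs \<phi> (extend y F) \<union> Req \<phi> RBbar (extend y F)"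
proof
  fix a assume F: "F \<in> row y" and a: "a \<in> Req \<phi> RBbar F"
  define c where "c = leftmost y F"
  have c: "c < y" "L (c, y) = F" using leftmost_row[OF F] c_def by auto
  obtain z where z: "y < z" "a \<in> obs \<phi> (L (c, z))"
    using compass_fulfil[OF compass, of "(c, y)"] a c by (force simp: is_point_def)
  have e: "extend y F = L (c, Suc y)" unfolding extend_def c_def by simp
  show "a \<in> obs \<phi> (extend y F) \<union> Req \<phi> RBbar (extend y F)"
  proof (cases "z = Suc y")
    case False
    then have "leadsB \<phi> (L (c, z)) (L (c, Suc y))" using compass_leadsB[OF compass] z c by auto
    then show ?thesis using z e unfolding leadsB_def by auto
  qed (use z e in auto)
qed

lemma row_Req_A: "F \<in> row y \<Longrightarrow> Req \<phi> RA F = onward \<phi> (birth y)"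
proof -
  assume "F \<in> row y"
  then obtain c where "c < y" "F = L (c, y)" unfolding row_def by blast
  then have "leadsA \<phi> F (birth y)" using compass_leadsA[OF compass] unfolding birth_def by auto
  then show ?thesis unfolding leadsA_def onward_def .
qed

text \<open>Following extensions from a label of row \<open>y\<close> traces the leftmost intervals; their
  left endpoints never increase, so they eventually stay on one column of \<open>L\<close>, whose
  \<open>RBbar\<close>-requests are fulfilled. Hence every \<open>RBbar\<close>-request is eventually observed.\<close>

fun trace :: "nat \<Rightarrow> 'p fml set \<Rightarrow> nat \<Rightarrow> 'p fml set" where
  "trace y F 0 = F"
| "trace y F (Suc j) = extend (y + j) (trace y F j)"

lemma trace_row: "F \<in> row y \<Longrightarrow> trace y F j \<in> row (y + j)"
  by (induction j) (auto simp: extend_row)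

lemma trace_eventually_column:
  assumes F: "F \<in> row y"
  shows "\<exists>J c. c < y + J \<and> (\<forall>j\<ge>J. L (c, y + j) = trace y F j)"
proof -
  define col where "col j = leftmost (y + j) (trace y F j)" for j
  have colp: "col j < y + j \<and> L (col j, y + j) = trace y F j" for j
    using leftmost_row[OF trace_row[OF F, of j]] unfolding col_def by simp
  have "col (Suc j) \<le> col j" for j
  proof -
    have "trace y F (Suc j) = L (col j, y + Suc j)" by (simp add: extend_def col_def)
    then show ?thesis using leftmost_le[of "col j" "y + Suc j"] colp[of j] by (simp add: col_def)
  qed
  then obtain J where "\<forall>j\<ge>J. col j = col J" using nat_antimono_stabilizes by blast
  then show ?thesis using colp by metis
qed

lemma trace_fulfils_Bbar:
  assumes F: "F \<in> row y" and a: "a \<in> Req \<phi> RBbar F"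
  shows "\<exists>k>0. a \<in> trace y F k"
proof (rule ccontr)
  assume never: "\<not> (\<exists>k>0. a \<in> trace y F k)"
  have pending: "a \<in> Req \<phi> RBbar (trace y F j)" for j
  proof (induction j)
    case (Suc j)
    then have "a \<in> obs \<phi> (trace y F (Suc j)) \<union> Req \<phi> RBbar (trace y F (Suc j))"
      using extend_Req_Bbar[OF trace_row[OF F, of j]] by auto
    then show ?case using never unfolding obs_def by blast
  qed (use a in simp)
  obtain J c where c: "c < y + J" "\<forall>j\<ge>J. L (c, y + j) = trace y F j"
    using trace_eventually_column[OF F] by blast
  then have "a \<in> Req \<phi> RBbar (L (c, y + J))" using pending[of J] by simp
  moreover have "is_point (c, y + J)" using c(1) by (simp add: is_point_def)
  ultimately obtain q where q: "irel RBbar (c, y + J) q" "a \<in> obs \<phi> (L q)"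
    using compass_fulfil[OF compass] by blast
  then obtain w where w: "q = (c, w)" "y + J < w" by (cases q) auto
  define k where "k = w - y"
  have k: "q = (c, y + k)" "J < k" using w unfolding k_def by auto
  then have "a \<in> trace y F k" using c(2) q(2) unfolding obs_def by simp
  moreover have "0 < k" using k(2) by simp
  ultimately show False using never by blast
qed

end

section \<open>Rebuilding a compass structure from a schedule of rows\<close>

context compass
begin

definition schedule :: "(nat \<Rightarrow> nat) \<Rightarrow> bool" where
  "schedule \<rho> \<longleftrightarrow> \<rho> 0 = 0 \<and> (\<forall>r. shadow (Suc (\<rho> r)) = shadow (\<rho> (Suc r)))"

fun rebuild :: "(nat \<Rightarrow> nat) \<Rightarrow> nat \<Rightarrow> nat \<Rightarrow> 'p fml set" where
  "rebuild \<rho> x 0 = {}"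
| "rebuild \<rho> x (Suc r) = (if x = r then birth (\<rho> r) else extend (\<rho> r) (rebuild \<rho> x r))"

definition rebuilt :: "(nat \<Rightarrow> nat) \<Rightarrow> nat \<times> nat \<Rightarrow> 'p fml set" where
  "rebuilt \<rho> p = rebuild \<rho> (fst p) (snd p)"

text \<open>All conditions of a compass structure except \<open>RBbar\<close>-fulfilment follow from the
  schedule property; \<open>RBbar\<close>-fulfilment is exactly fairness.\<close>

definition fair :: "(nat \<Rightarrow> nat) \<Rightarrow> bool" where
  "fair \<rho> \<longleftrightarrow> (\<forall>x z a. x < z \<longrightarrow> a \<in> Req \<phi> RBbar (rebuild \<rho> x z) \<longrightarrow> (\<exists>z'>z. a \<in> rebuild \<rho> x z'))"

lemma rebuild_row_shadow:
  assumes "schedule \<rho>"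
  shows "{rebuild \<rho> x r | x. x < r} = shadow (\<rho> r)"
proof (induction r)
  case 0
  then show ?case using assms unfolding schedule_def by simp
next
  case (Suc r)
  have "{rebuild \<rho> x (Suc r) | x. x < Suc r}
      = insert (birth (\<rho> r)) (extend (\<rho> r) ` {rebuild \<rho> x r | x. x < r})"
    by (auto simp: less_Suc_eq)
  also have "\<dots> = shadow (Suc (\<rho> r))" using Suc by auto
  also have "\<dots> = shadow (\<rho> (Suc r))" using assms unfolding schedule_def by blast
  finally show ?case .
qed

lemma rebuild_shadow: "schedule \<rho> \<Longrightarrow> x < r \<Longrightarrow> rebuild \<rho> x r \<in> shadow (\<rho> r)"
  using rebuild_row_shadow by blast

lemma rebuild_row: "schedule \<rho> \<Longrightarrow> x < r \<Longrightarrow> rebuild \<rho> x r \<in> row (\<rho> r)"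
  using rebuild_shadow shadow_row by blast

text \<open>Each rebuilt column is a chain of \<open>leadsB\<close>-steps, so it is \<open>leadsB\<close>-consistent and
  its \<open>onward\<close>-set is the one of the birth at its start; its \<open>RB\<close>-requests are observed
  further down the column.\<close>

lemma rebuild_leadsB:
  assumes \<rho>: "schedule \<rho>" and x: "x < z'"
  shows "z' < z \<Longrightarrow> leadsB \<phi> (rebuild \<rho> x z) (rebuild \<rho> x z')"
proof (induction z)
  case (Suc z)
  have xz: "x < z" using x Suc.prems by simp
  have step: "leadsB \<phi> (rebuild \<rho> x (Suc z)) (rebuild \<rho> x z)"
    using extend_leadsB[OF rebuild_row[OF \<rho> xz]] xz by simp
  show ?case
  proof (cases "z' = z")
    case False
    then show ?thesis using Suc step leadsB_trans by (metis less_SucE)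
  qed (use step in simp)
qed simp

lemma rebuild_onward:
  assumes "schedule \<rho>" "x < z"
  shows "onward \<phi> (rebuild \<rho> x z) = onward \<phi> (birth (\<rho> x))"
proof (cases "z = Suc x")
  case False
  then have "leadsB \<phi> (rebuild \<rho> x z) (rebuild \<rho> x (Suc x))"
    using rebuild_leadsB[OF assms(1), of x "Suc x" z] assms(2) by simp
  then show ?thesis using leadsB_onward by simp
qed simp

lemma rebuild_Req_B:
  assumes \<rho>: "schedule \<rho>"
  shows "x < z \<Longrightarrow> a \<in> Req \<phi> RB (rebuild \<rho> x z) \<Longrightarrow> \<exists>z'. x < z' \<and> z' < z \<and> a \<in> rebuild \<rho> x z'"
proof (induction z)
  case (Suc z)
  show ?case
  proof (cases "x = z")
    case True
    then show ?thesis using Suc.prems birth_Req_B by simp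
  next
    case False
    then have xz: "x < z" using Suc.prems by simp
    then have "a \<in> obs \<phi> (rebuild \<rho> x z) \<union> Req \<phi> RB (rebuild \<rho> x z)"
      using extend_Req_B[OF rebuild_row[OF \<rho> xz]] Suc.prems by auto
    then show ?thesis
    proof
      assume "a \<in> obs \<phi> (rebuild \<rho> x z)"
      then show ?thesis using xz unfolding obs_def by auto
    next
      assume "a \<in> Req \<phi> RB (rebuild \<rho> x z)"
      then obtain z' where "x < z'" "z' < z" "a \<in> rebuild \<rho> x z'" using Suc.IH xz by blast
      then show ?thesis using less_SucI by blast
    qed
  qed
qed simp

lemma rebuild_pending:
  assumes \<rho>: "schedule \<rho>" and x: "x < z" and a: "a \<in> Req \<phi> RBbar (rebuild \<rho> x z)"
    and never: "\<forall>z'>z. a \<notin> rebuild \<rho> x z'"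
  shows "z \<le> z' \<Longrightarrow> a \<in> Req \<phi> RBbar (rebuild \<rho> x z')"
proof (induction z' rule: dec_induct)
  case (step k)
  have xk: "x < k" using x step by simp
  have "a \<in> obs \<phi> (rebuild \<rho> x (Suc k)) \<union> Req \<phi> RBbar (rebuild \<rho> x (Suc k))"
    using extend_Req_Bbar[OF rebuild_row[OF \<rho> xk]] step.IH xk by auto
  moreover have "a \<notin> rebuild \<rho> x (Suc k)" using never step(1) le_imp_less_Suc by blast
  ultimately show ?case unfolding obs_def by blast
qed (use a in simp)

lemma rebuilt_fulfil:
  assumes \<rho>: "schedule \<rho>" and fair: "fair \<rho>" and xz: "x < z"
    and a: "a \<in> Req \<phi> r (rebuild \<rho> x z)"
  shows "\<exists>q. is_point q \<and> irel r (x, z) q \<and> a \<in> obs \<phi> (rebuilt \<rho> q)"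
proof -
  have witness: "\<exists>q. is_point q \<and> irel r (x, z) q \<and> a \<in> obs \<phi> (rebuilt \<rho> q)"
    if "u < v" "irel r (x, z) (u, v)" "a \<in> rebuild \<rho> u v" for u v
    using that Req_Cl[OF a] unfolding rebuilt_def obs_def is_point_def by fastforce
  show ?thesis
  proof (cases r)
    case RA
    have "a \<in> onward \<phi> (birth (\<rho> z))" using row_Req_A[OF rebuild_row[OF \<rho> xz]] a RA by simp
    then have "a \<in> rebuild \<rho> z (Suc z) \<or> a \<in> Req \<phi> RBbar (rebuild \<rho> z (Suc z))"
      using birth_Req_B unfolding onward_def obs_def by auto
    then have "\<exists>z'>z. a \<in> rebuild \<rho> z z'"
    proof
      assume "a \<in> rebuild \<rho> z (Suc z)"
      then show ?thesis by (intro exI[of _ "Suc z"]) simp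
    next
      assume "a \<in> Req \<phi> RBbar (rebuild \<rho> z (Suc z))"
      then obtain z' where "Suc z < z'" "a \<in> rebuild \<rho> z z'"
        using fair unfolding fair_def by (meson lessI)
      then show ?thesis by (intro exI[of _ z']) simp
    qed
    then obtain z' where "z < z'" "a \<in> rebuild \<rho> z z'" by blast
    then show ?thesis using witness[of z z'] RA by simp
  next
    case RB
    then obtain z' where "x < z'" "z' < z" "a \<in> rebuild \<rho> x z'"
      using rebuild_Req_B[OF \<rho> xz] a by blast
    then show ?thesis using witness[of x z'] RB by simp
  next
    case RBbar
    then obtain z' where "z < z'" "a \<in> rebuild \<rho> x z'"
      using fair xz a unfolding fair_def by blast
    then show ?thesis using witness[of x z'] RBbar xz by simp
  qed
qed

theorem rebuilt_compass:
  assumes \<rho>: "schedule \<rho>" and fair: "fair \<rho>"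
  shows "inf_compass \<phi> (rebuilt \<rho>)"
  unfolding inf_compass_def
proof (intro conjI allI impI)
  fix p assume "is_point p"
  then show "is_atom \<phi> (rebuilt \<rho> p)"
    using rebuild_row[OF \<rho>] row_atom unfolding rebuilt_def is_point_def atoms_def
    by (cases p) auto
next
  fix p q assume "is_point p \<and> is_point q \<and> irel RA p q"
  then obtain x y z where pq: "p = (x, y)" "q = (y, z)" "x < y" "y < z"
    by (cases p; cases q) (auto simp: is_point_def)
  have "Req \<phi> RA (rebuild \<rho> x y) = onward \<phi> (birth (\<rho> y))"
    using row_Req_A[OF rebuild_row[OF \<rho> pq(3)]] .
  also have "\<dots> = onward \<phi> (rebuild \<rho> y z)" using rebuild_onward[OF \<rho> pq(4)] by simp
  finally show "leadsA \<phi> (rebuilt \<rho> p) (rebuilt \<rho> q)"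
    unfolding leadsA_def rebuilt_def pq onward_def by simp
next
  fix p q assume "is_point p \<and> is_point q \<and> irel RB p q"
  then show "leadsB \<phi> (rebuilt \<rho> p) (rebuilt \<rho> q)"
    using rebuild_leadsB[OF \<rho>] unfolding rebuilt_def
    by (cases p; cases q) (auto simp: is_point_def)
next
  fix p r a assume "is_point p \<and> a \<in> Req \<phi> r (rebuilt \<rho> p)"
  then show "\<exists>q. is_point q \<and> irel r p q \<and> a \<in> obs \<phi> (rebuilt \<rho> q)"
    using rebuilt_fulfil[OF \<rho> fair] unfolding rebuilt_def is_point_def
    by (cases p) auto
qed

lemma rebuild_transport:
  assumes same: "\<And>k. \<rho> (y + k) = \<rho> (y' + k)" and "x < y" "x' < y'"
    and start: "rebuild \<rho> x y = rebuild \<rho> x' y'"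
  shows "rebuild \<rho> x (y + k) = rebuild \<rho> x' (y' + k)"
proof (induction k)
  case (Suc k)
  have "rebuild \<rho> x (y + Suc k) = extend (\<rho> (y + k)) (rebuild \<rho> x (y + k))"
    using \<open>x < y\<close> by simp
  also have "\<dots> = extend (\<rho> (y' + k)) (rebuild \<rho> x' (y' + k))" using Suc same by simp
  also have "\<dots> = rebuild \<rho> x' (y' + Suc k)"
    using \<open>x' < y'\<close> by simp
  finally show ?case .
qed (use start in simp)

text \<open>An eventually periodic schedule yields a periodic rebuilt structure; the binding
  \<open>g\<close> maps a start point before the threshold to one carrying the same label at the
  threshold, which exists because both rows have the same shadow.\<close>

theorem rebuilt_periodic:
  assumes \<rho>: "schedule \<rho>" and per: "\<And>r. y0 \<le> r \<Longrightarrow> \<rho> (r + p) = \<rho> r"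
  shows "\<exists>g. periodic (rebuilt \<rho>) y0 p g"
proof -
  have shift: "\<rho> (r + k) = \<rho> (r - p + k)" if "y0 + p \<le> r" for r k
    using per[of "r - p + k"] that by (simp add: algebra_simps)
  have inner: "rebuild \<rho> x y = rebuild \<rho> (x - p) (y - p)" if "y0 + p \<le> x" "x < y" for x y
  proof -
    have "rebuild \<rho> x (Suc x) = rebuild \<rho> (x - p) (Suc (x - p))"
      using shift[OF that(1), of 0] by simp
    then have "rebuild \<rho> x (Suc x + (y - Suc x)) = rebuild \<rho> (x - p) (Suc (x - p) + (y - Suc x))"
      using shift[OF that(1), of "Suc _"] by (intro rebuild_transport) auto
    moreover have "Suc x + (y - Suc x) = y" "Suc (x - p) + (y - Suc x) = y - p" using that by auto
    ultimately show ?thesis by metis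
  qed
  have "\<exists>c<y0. rebuild \<rho> c y0 = rebuild \<rho> x (y0 + p)" if "x < y0 + p" for x
  proof -
    have "rebuild \<rho> x (y0 + p) \<in> shadow (\<rho> y0)"
      using rebuild_shadow[OF \<rho> that] per[of y0] by simp
    then obtain c where "c < y0" "rebuild \<rho> x (y0 + p) = rebuild \<rho> c y0"
      unfolding rebuild_row_shadow[OF \<rho>, of y0, symmetric] by blast
    then show ?thesis by auto
  qed
  then obtain g where g: "\<And>x. x < y0 + p \<Longrightarrow> g x < y0 \<and> rebuild \<rho> (g x) y0 = rebuild \<rho> x (y0 + p)"
    by metis
  have border: "rebuild \<rho> x y = rebuild \<rho> (g x) (y - p)" if "x < y0 + p" "y0 + p \<le> y" for x y
  proof -
    have "rebuild \<rho> x (y0 + p + (y - (y0 + p))) = rebuild \<rho> (g x) (y0 + (y - (y0 + p)))"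
    proof (rule rebuild_transport)
      show "\<rho> (y0 + p + k) = \<rho> (y0 + k)" for k using per[of "y0 + k"] by (simp add: algebra_simps)
    qed (use g[OF that(1)] that(1) in auto)
    then show ?thesis using that(2) by (simp add: algebra_simps)
  qed
  have "periodic (rebuilt \<rho>) y0 p g"
    unfolding periodic_def rebuilt_def using g inner border by auto
  then show ?thesis by blast
qed

lemma rebuilt_features:
  assumes \<rho>: "schedule \<rho>" and fair: "fair \<rho>" and \<phi>: "\<phi> \<in> onward \<phi> (birth 0)"
  shows "features (rebuilt \<rho>) \<phi>"
proof -
  have b: "rebuild \<rho> 0 1 = birth 0" using \<rho> unfolding schedule_def by simp
  then have "\<phi> \<in> rebuild \<rho> 0 1 \<or> \<phi> \<in> Req \<phi> RBbar (rebuild \<rho> 0 1)"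
    using \<phi> birth_Req_B unfolding onward_def obs_def by auto
  then have "\<exists>z. 0 < z \<and> \<phi> \<in> rebuild \<rho> 0 z"
    using fair unfolding fair_def by (metis less_one less_trans zero_less_one)
  then show ?thesis unfolding features_def rebuilt_def is_point_def by force
qed

end

section \<open>Fair schedules by pumping\<close>

context compass
begin

text \<open>Pending \<open>RBbar\<close>-requests for \<open>a\<close>: the labels of a shadow requesting \<open>a\<close> in the future,
  and the step that extends them by one row and drops those now observing \<open>a\<close>.\<close>

definition pending :: "'p fml \<Rightarrow> nat \<Rightarrow> 'p fml set set" where
  "pending a y = {F \<in> shadow y. a \<in> Req \<phi> RBbar F}"

definition discharge :: "'p fml \<Rightarrow> nat \<Rightarrow> 'p fml set set \<Rightarrow> 'p fml set set" where
  "discharge a y U = {G \<in> extend y ` U. a \<notin> G}"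

definition discharges :: "'p fml \<Rightarrow> (nat \<Rightarrow> nat) \<Rightarrow> nat \<Rightarrow> bool" where
  "discharges a w n \<longleftrightarrow> track (discharge a) w (pending a (w 0)) n = {}"

lemma shadow_walk_nonempty: "walk shadow w n \<Longrightarrow> j \<in> {1..n} \<Longrightarrow> shadow (w j) \<noteq> {}"
  unfolding walk_def by (cases j) (auto dest!: spec[of _ "j - 1"])

lemma track_discharge_shadow:
  assumes w: "walk shadow w n"
  shows "j \<le> n \<Longrightarrow> track (discharge a) w (pending a (w 0)) j \<subseteq> shadow (w j)"
proof (induction j)
  case (Suc j)
  then have "track (discharge a) w (pending a (w 0)) (Suc j) \<subseteq> shadow (Suc (w j))"
    unfolding discharge_def by auto
  then show ?case using w Suc.prems unfolding walk_def by simp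
qed (auto simp: pending_def)

lemma loop_states_mem:
  "walk shadow w n \<Longrightarrow> \<forall>j\<in>{1..n}. (shadow (w j), track (discharge a) w (pending a (w 0)) j) \<in> loop_states \<phi>"
  using shadow_walk_nonempty track_discharge_shadow shadow_atoms
  unfolding loop_states_def by fastforce

lemma track_discharge_consecutive:
  "track (discharge a) (\<lambda>j. z + j) U j
    \<subseteq> {trace z F j | F. F \<in> U \<and> (\<forall>i. 0 < i \<and> i \<le> j \<longrightarrow> a \<notin> trace z F i)}"
proof (induction j)
  case (Suc j)
  show ?case
  proof
    fix G assume "G \<in> track (discharge a) (\<lambda>j. z + j) U (Suc j)"
    then obtain H where H: "H \<in> track (discharge a) (\<lambda>j. z + j) U j" "G = extend (z + j) H" "a \<notin> G"
      unfolding discharge_def by auto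
    then obtain F where F: "F \<in> U" "H = trace z F j" "\<forall>i. 0 < i \<and> i \<le> j \<longrightarrow> a \<notin> trace z F i"
      using Suc.IH by blast
    then have "G = trace z F (Suc j)" "\<forall>i. 0 < i \<and> i \<le> Suc j \<longrightarrow> a \<notin> trace z F i"
      using H le_Suc_eq by auto
    then show "G \<in> {trace z F (Suc j) | F. F \<in> U \<and> (\<forall>i. 0 < i \<and> i \<le> Suc j \<longrightarrow> a \<notin> trace z F i)}"
      using F(1) by blast
  qed
qed auto

text \<open>Walking through consecutive rows discharges \<open>a\<close> eventually,
  since every trace observes \<open>a\<close>; pigeonhole then bounds the length.\<close>

lemma phase:
  assumes T: "infinite {y. shadow y = T}"
  shows "\<exists>w n. w 0 = z \<and> walk shadow w n \<and> 1 \<le> n \<and> n \<le> card (loop_states \<phi>)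
    \<and> shadow (w n) = T \<and> discharges a w n"
proof -
  have "\<forall>F\<in>pending a z. \<exists>k. 0 < k \<and> a \<in> trace z F k"
    using shadow_row trace_fulfils_Bbar unfolding pending_def by blast
  then obtain k where k: "\<forall>F\<in>pending a z. 0 < k F \<and> a \<in> trace z F (k F)"
    by (auto dest!: bchoice)
  have "finite (k ` pending a z)" unfolding pending_def using finite_shadow by simp
  then obtain B where B: "\<forall>v \<in> k ` pending a z. v \<le> B"
    unfolding finite_nat_set_iff_bounded_le by blast
  obtain b where b: "shadow b = T" "z + B < b" using T unfolding infinite_nat_iff_unbounded by blast
  define n where "n = b - z"
  have w: "walk shadow (\<lambda>j. z + j) n" unfolding walk_def by simp
  have "\<not> (\<forall>i. 0 < i \<and> i \<le> n \<longrightarrow> a \<notin> trace z F i)" if F: "F \<in> pending a z" for F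
  proof -
    have "k F \<le> B" using B F by blast
    then have "k F \<le> n" using b unfolding n_def by simp
    then show ?thesis using k F by blast
  qed
  then have "track (discharge a) (\<lambda>j. z + j) (pending a z) n = {}"
    using track_discharge_consecutive[of a z "pending a z" n] by blast
  then have final: "shadow (z + n) = T \<and> track (discharge a) (\<lambda>j. z + j) (pending a z) n = {}"
    using b unfolding n_def by simp
  have "1 \<le> n" using b unfolding n_def by simp
  note shorten = walk_shorten[where P = "\<lambda>C U. C = T \<and> U = {}",
      OF finite_loop_states w \<open>1 \<le> n\<close> _ loop_states_mem[OF w, of a]]
  obtain w' n' where "w' 0 = z" "walk shadow w' n'" "1 \<le> n'" "n' \<le> card (loop_states \<phi>)"
      "shadow (w' n') = T" "track (discharge a) w' (pending a z) n' = {}"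
    using shorten final by auto
  then show ?thesis unfolding discharges_def by metis
qed

lemma recurrent_shadow: "\<exists>T. infinite {y. shadow y = T}"
proof -
  have "finite (range shadow)"
  proof (rule finite_subset)
    show "range shadow \<subseteq> Pow (atoms \<phi>)" using shadow_atoms by auto
  qed simp
  then obtain y0 where "infinite {y \<in> UNIV. shadow y = shadow y0}"
    using pigeonhole_infinite[of "UNIV :: nat set" shadow] by auto
  then show ?thesis by auto
qed

lemma stem:
  assumes T: "infinite {y. shadow y = T}"
  shows "\<exists>w n. w 0 = 0 \<and> walk shadow w n \<and> 1 \<le> n \<and> n \<le> card (stem_states \<phi>) \<and> shadow (w n) = T"
proof -
  obtain b where b: "shadow b = T" "0 < b" using T unfolding infinite_nat_iff_unbounded by blast
  have w: "walk shadow id b" unfolding walk_def by simp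
  have none: "track (\<lambda>_ U. U) w {} j = {}" for w :: "nat \<Rightarrow> nat" and j
    by (induction j) auto
  have "\<forall>j\<in>{1..b}. (shadow (id j), track (\<lambda>_ U. U) id ({} :: 'p fml set set) j) \<in> stem_states \<phi>"
    using shadow_walk_nonempty[OF w] shadow_atoms unfolding stem_states_def none by auto
  from walk_shorten[where P = "\<lambda>C U. C = T", OF finite_stem_states w _ _ this]
  show ?thesis using b by simp
qed

lemma discharges_cong:
  assumes "\<And>k. k \<le> n \<Longrightarrow> w k = w' k"
  shows "discharges a w n = discharges a w' n"
proof -
  have "track (discharge a) w U n = track (discharge a) w' U n" for U
    using assms by (intro track_cong) simp
  moreover have "w 0 = w' 0" using assms by simp
  ultimately show ?thesis unfolding discharges_def by simp
qed

text \<open>The loop: a walk from \<open>T\<close> back to \<open>T\<close> that contains, for every formula in the list,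
  a segment discharging it; it is the concatenation of one phase per formula.\<close>

lemma loop:
  assumes T: "infinite {y. shadow y = T}"
  shows "shadow z = T \<Longrightarrow> \<exists>w n. w 0 = z \<and> walk shadow w n \<and> shadow (w n) = T
    \<and> length as \<le> n \<and> n \<le> length as * card (loop_states \<phi>)
    \<and> (\<forall>a \<in> set as. \<exists>i l. 0 < l \<and> i + l \<le> n \<and> discharges a (\<lambda>k. w (i + k)) l)"
proof (induction as arbitrary: z)
  case Nil
  then show ?case by (intro exI[of _ "\<lambda>_. z"] exI[of _ 0]) (simp add: walk_def)
next
  case (Cons a as)
  obtain w1 n1 where w1: "w1 0 = z" "walk shadow w1 n1" "1 \<le> n1" "n1 \<le> card (loop_states \<phi>)"
    "shadow (w1 n1) = T" "discharges a w1 n1"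
    using phase[OF T] by blast
  obtain w2 n2 where w2: "w2 0 = w1 n1" "walk shadow w2 n2" "shadow (w2 n2) = T" "length as \<le> n2"
    "n2 \<le> length as * card (loop_states \<phi>)"
    "\<forall>b \<in> set as. \<exists>i l. 0 < l \<and> i + l \<le> n2 \<and> discharges b (\<lambda>k. w2 (i + k)) l"
    using Cons.IH[OF w1(5)] by blast
  define w where "w = walk_append w1 n1 w2"
  have left: "w k = w1 k" if "k \<le> n1" for k using that walk_append_left unfolding w_def by simp
  have right: "w (n1 + k) = w2 k" for k using walk_append_right[of w2 w1 n1, OF w2(1)] unfolding w_def .
  have "discharges a (\<lambda>k. w (0 + k)) n1" using w1(6) left by (subst discharges_cong) auto
  moreover have "\<exists>i l. 0 < l \<and> i + l \<le> n1 + n2 \<and> discharges b (\<lambda>k. w (i + k)) l"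
    if b: "b \<in> set as" for b
  proof -
    obtain i l where "0 < l" "i + l \<le> n2" "discharges b (\<lambda>k. w2 (i + k)) l"
      using bspec[OF w2(6) b] by (elim exE conjE)
    moreover have "(\<lambda>k. w (n1 + i + k)) = (\<lambda>k. w2 (i + k))" using right by (simp add: add.assoc)
    ultimately show ?thesis by (intro exI[of _ "n1 + i"] exI[of _ l]) auto
  qed
  ultimately have "\<forall>b \<in> set (a # as). \<exists>i l. 0 < l \<and> i + l \<le> n1 + n2 \<and> discharges b (\<lambda>k. w (i + k)) l"
    using w1(3) by (metis add_0 le_add1 less_le_trans set_ConsD zero_less_one)
  moreover have "walk shadow w (n1 + n2)" using walk_append[OF w1(2) w2(2,1)] unfolding w_def .
  moreover have "w 0 = z" "shadow (w (n1 + n2)) = T" using left[of 0] right[of n2] w1(1) w2(3) by auto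
  ultimately show ?case using w1(3,4) w2(4,5) by (intro exI[of _ w] exI[of _ "n1 + n2"]) auto
qed

lemma rebuild_tracked:
  assumes \<rho>: "schedule \<rho>" and xz: "x < z" and a: "a \<in> Req \<phi> RBbar (rebuild \<rho> x z)"
    and never: "\<forall>z'>z. a \<notin> rebuild \<rho> x z'" and s: "z \<le> s"
    and seg: "\<forall>j<l. \<rho> (s + j) = u j" and l: "0 < l"
  shows "j \<le> l \<Longrightarrow> rebuild \<rho> x (s + j) \<in> track (discharge a) u (pending a (u 0)) j"
proof (induction j)
  case 0
  have "\<rho> s = u 0" using seg l by (metis add_0_right)
  then have "rebuild \<rho> x s \<in> shadow (u 0)"
    using rebuild_shadow[OF \<rho>, of x s] xz s by simp
  moreover have "a \<in> Req \<phi> RBbar (rebuild \<rho> x s)" using rebuild_pending[OF \<rho> xz a never s] .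
  ultimately show ?case unfolding pending_def by simp
next
  case (Suc j)
  have "\<rho> (s + j) = u j" using seg Suc.prems by simp
  then have "rebuild \<rho> x (s + Suc j) = extend (u j) (rebuild \<rho> x (s + j))"
    using xz s by simp
  moreover have "a \<notin> rebuild \<rho> x (s + Suc j)"
    using never[rule_format, of "s + Suc j"] s by linarith
  ultimately show ?case using Suc unfolding discharge_def by auto
qed

lemma fair_criterion:
  assumes \<rho>: "schedule \<rho>"
    and segments: "\<And>a z. a \<in> Cl \<phi> \<Longrightarrow>
      \<exists>s u l. z \<le> s \<and> 0 < l \<and> (\<forall>j<l. \<rho> (s + j) = u j) \<and> discharges a u l"
  shows "fair \<rho>"
  unfolding fair_def
proof (intro allI impI)
  fix x z a assume xz: "x < z" and a: "a \<in> Req \<phi> RBbar (rebuild \<rho> x z)"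
  show "\<exists>z'>z. a \<in> rebuild \<rho> x z'"
  proof (rule ccontr)
    assume "\<not> (\<exists>z'>z. a \<in> rebuild \<rho> x z')"
    then have never: "\<forall>z'>z. a \<notin> rebuild \<rho> x z'" by blast
    obtain s u l where "z \<le> s" "0 < l" "\<forall>j<l. \<rho> (s + j) = u j" "discharges a u l"
      using segments[OF Req_Cl[OF a]] by blast
    then show False
      using rebuild_tracked[OF \<rho> xz a never, where s = s and u = u and l = l and j = l]
      unfolding discharges_def by simp
  qed
qed

text \<open>Main construction: a lasso made of a stem and a loop discharging every closure
  formula is a fair, eventually periodic schedule with the required bounds.\<close>

lemma fair_periodic_schedule:
  "\<exists>\<rho> y0 p. schedule \<rho> \<and> fair \<rho> \<and> (\<forall>r\<ge>y0. \<rho> (r + p) = \<rho> r) \<and> 0 < p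
    \<and> y0 \<le> card (stem_states \<phi>) \<and> p \<le> card (Cl \<phi>) * card (loop_states \<phi>)"
proof -
  obtain T where T: "infinite {y. shadow y = T}" using recurrent_shadow by blast
  obtain ws y0 where ws: "ws 0 = 0" "walk shadow ws y0" "1 \<le> y0" "y0 \<le> card (stem_states \<phi>)"
    "shadow (ws y0) = T"
    using stem[OF T] by blast
  obtain as where as: "set as = Cl \<phi>" "length as = card (Cl \<phi>)"
    using finite_distinct_list[OF finite_Cl] distinct_card by metis
  obtain lp p where lp: "lp 0 = ws y0" "walk shadow lp p" "shadow (lp p) = T" "length as \<le> p"
    "p \<le> length as * card (loop_states \<phi>)"
    "\<forall>a \<in> set as. \<exists>i l. 0 < l \<and> i + l \<le> p \<and> discharges a (\<lambda>k. lp (i + k)) l"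
    using loop[OF T ws(5)] by blast
  have p: "0 < p" using lp(4) as(2) card_gt_0_iff self_Cl finite_Cl by fastforce
  define \<rho> where "\<rho> = lasso ws y0 lp p"
  have "schedule \<rho>"
    using lasso_walk[OF ws(2) lp(2,1) _ p] lp(1,3) ws(1,3,5) unfolding schedule_def \<rho>_def lasso_def
    by simp
  moreover have "fair \<rho>"
  proof (rule fair_criterion[OF \<open>schedule \<rho>\<close>])
    fix a z assume "a \<in> Cl \<phi>"
    then obtain i l where il: "0 < l" "i + l \<le> p" "discharges a (\<lambda>k. lp (i + k)) l"
      using lp(6) as(1) by blast
    have "z * 1 \<le> z * p" using p by (intro mult_le_mono2) simp
    then have "z \<le> y0 + z * p + i" by linarith
    moreover have "\<rho> (y0 + z * p + i + j) = lp (i + j)" if "j < l" for j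
      using lasso_loop[of "i + j" p ws y0 lp z] that il(2) unfolding \<rho>_def by (simp add: add.assoc)
    ultimately show "\<exists>s u l. z \<le> s \<and> 0 < l \<and> (\<forall>j<l. \<rho> (s + j) = u j) \<and> discharges a u l"
      using il by (intro exI[of _ "y0 + z * p + i"] exI[of _ "\<lambda>k. lp (i + k)"] exI[of _ l]) auto
  qed
  moreover have "\<forall>r\<ge>y0. \<rho> (r + p) = \<rho> r" unfolding \<rho>_def using lasso_periodic by blast
  ultimately show ?thesis using p ws(4) lp(5) as(2) by auto
qed

lemma obs_onward_birth: "x < y \<Longrightarrow> a \<in> obs \<phi> (L (x, y)) \<Longrightarrow> a \<in> onward \<phi> (birth x)"
proof (cases "y = Suc x")
  case False
  assume "x < y" "a \<in> obs \<phi> (L (x, y))"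
  moreover have "leadsB \<phi> (L (x, y)) (L (x, Suc x))"
    using compass_leadsB[OF compass] False \<open>x < y\<close> by simp
  ultimately show ?thesis unfolding onward_def birth_def leadsB_def by auto
qed (simp add: onward_def birth_def)

theorem periodic_compass:
  assumes \<phi>: "\<phi> \<in> onward \<phi> (birth 0)"
  shows "\<exists>L' y0 p g. inf_compass \<phi> L' \<and> periodic L' y0 p g \<and> features L' \<phi> \<and> 0 < p
    \<and> y0 \<le> card (stem_states \<phi>) \<and> p \<le> card (Cl \<phi>) * card (loop_states \<phi>)"
proof -
  obtain \<rho> y0 p where \<rho>: "schedule \<rho>" "fair \<rho>" "\<forall>r\<ge>y0. \<rho> (r + p) = \<rho> r" "0 < p"
    "y0 \<le> card (stem_states \<phi>)" "p \<le> card (Cl \<phi>) * card (loop_states \<phi>)"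
    using fair_periodic_schedule by blast
  obtain g where "periodic (rebuilt \<rho>) y0 p g" using rebuilt_periodic[OF \<rho>(1)] \<rho>(3) by blast
  then show ?thesis
    using rebuilt_compass[OF \<rho>(1,2)] rebuilt_features[OF \<rho>(1,2) \<phi>] \<rho>(4-6) by blast
qed

end

lemma state_space_bounds:
  fixes \<phi> :: "'p fml"
  defines "N \<equiv> 2 ^ 2 ^ (7 * fsize \<phi>) :: nat"
  shows "card (stem_states \<phi>) < N"
    and "card (Cl \<phi>) * card (loop_states \<phi>) < 2 * fsize \<phi> * N * N"
proof -
  define M where "M = card (atoms \<phi>)"
  have MN: "2 ^ M \<le> N" unfolding N_def M_def using card_atoms by (intro power_increasing) auto
  have pos: "0 < (2::nat) ^ M" by simp
  show "card (stem_states \<phi>) < N" using card_stem_states[of \<phi>] MN pos unfolding M_def by linarith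
  have "card (loop_states \<phi>) < 2 ^ M * 2 ^ M"
    using card_loop_states[of \<phi>] pos unfolding M_def by simp
  also have "\<dots> \<le> N * N" using MN by (intro mult_mono) auto
  finally have "card (loop_states \<phi>) < N * N" .
  have "card (Cl \<phi>) * card (loop_states \<phi>) \<le> 2 * fsize \<phi> * card (loop_states \<phi>)"
    using card_Cl by (rule mult_right_mono) simp
  also have "\<dots> < 2 * fsize \<phi> * (N * N)"
    using \<open>card (loop_states \<phi>) < N * N\<close> fsize_pos by simp
  finally show "card (Cl \<phi>) * card (loop_states \<phi>) < 2 * fsize \<phi> * N * N"
    by (simp add: mult.assoc)
qed

theorem theorem2:
  fixes \<phi> :: "'p fml"
  shows "inf_satisfiable \<phi> \<longleftrightarrow>
    (\<exists>L y0 yp g. inf_compass \<phi> L \<and> periodic L y0 yp g \<and> features L \<phi> \<and> 0 < yp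
       \<and> y0 < 2 ^ 2 ^ (7 * fsize \<phi>)
       \<and> yp < 2 * fsize \<phi> * 2 ^ 2 ^ (7 * fsize \<phi>) * 2 ^ 2 ^ (7 * fsize \<phi>))"
    (is "_ \<longleftrightarrow> ?periodic")
proof
  assume "inf_satisfiable \<phi>"
  then obtain L y where L: "inf_compass \<phi> L" "0 < y" "\<phi> \<in> L (0, y)"
    using sat_to_compass by blast
  interpret compass \<phi> L using L(1) by unfold_locales
  have "\<phi> \<in> onward \<phi> (birth 0)"
    using obs_onward_birth[OF L(2)] L(3) self_Cl unfolding obs_def by blast
  then show ?periodic
    using periodic_compass state_space_bounds[of \<phi>] by (meson le_less_trans)
next
  assume ?periodic
  then show "inf_satisfiable \<phi>" using compass_to_sat by blast
qed

end
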